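(* Let $\varphi$ be a basic existential or basic universal sentence of spread $m$ and range $r'$ over a graph language $L$, and let $C,M\notin L$ be distinct unary predicate symbols. Let $G$ be an $L$-interpretation and $\lambda$ a layering of $\overline G$. Let $r\ge r'$ and $\ell>4r$ be integers, let $R$ be an $(\ell,r)$-cover of integers, and let $p$ be an $m$-plan for $R$. Suppose that for each $I\in R$, $$G[\lambda^{-1}(I)],\ C:=\lambda^{-1}(M_{2r}(I)),\ M:=\lambda^{-1}(M_r(I))\models\varphi^{(p(I))}.$$ Then $G\models\varphi$.
   Context: A graph language $L$ consists of a binary predicate symbol $e$ and a finite set of unary predicate symbols. An $L$-interpretation $G$ consists of a graph $\overline G$ and a set $S_C\subseteq V(\overline G)$ for each unary $C\in L$; $e$ is interpreted as adjacency in $\overline G$. For $S\subseteq V(\overline G)$, $G[S]$ is the interpretation on $\overline G[S]$ with each unary predicate restricted to $S$; "$H, C:=A, M:=B$" denotes the expansion of $H$ with new unary predicates $C,M$ interpreted as $A,B$. A layering of a graph is a function $\lambda:V\to\mathbb Z$ with $|\lambda(u)-\lambda(v)|\le1$ on edges. $d(x,y)\le r$ abbreviates $(\exists z_0,\dots,z_r)\,z_0=x\land z_r=y\land\bigwedge_{i=1}^r(z_{i-1}=z_i\lor e(z_{i-1},z_i))$. An $r$-local formula is a formula $\psi$ with one free variable $x$ in which all quantifications are of the form $(\exists y: d(x,y)\le r)$ or $(\forall y: d(x,y)\le r)$. A basic existential sentence is one of the form $(\exists x_1,\dots,x_m)\bigwedge_{1\le i<j\le m}d(x_i,x_j)>2r\land\bigwedge_{i=1}^m\psi(x_i)$,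 and a basic universal sentence is one of the form $(\forall x_1,\dots,x_{m+1})\bigl(\bigwedge_{1\le i<j\le m+1}d(x_i,x_j)>2r\bigr)\Rightarrow\bigvee_{i=1}^{m+1}\psi(x_i)$, where in both cases $\psi$ is $r$-local; $m$ is the spread, $r$ the range and $\psi$ the core. For such $\varphi$ and an integer $k\ge0$, the $(C,M,k)$-variant $\varphi^{(k)}$ is $(\exists x_1,\dots,x_k)\bigwedge_{1\le i<j\le k}d(x_i,x_j)>2r\land\bigwedge_{i=1}^k(C(x_i)\land\psi(x_i))$ if $\varphi$ is basic existential, and $(\forall x_1,\dots,x_{k+1})\bigl(\bigwedge_{i=1}^{k+1}M(x_i)\land\bigwedge_{1\le i<j\le k+1}d(x_i,x_j)>2r\bigr)\Rightarrow\bigvee_{i=1}^{k+1}\psi(x_i)$ if $\varphi$ is basic universal. For integers $\ell\ge 2r+1$ and $n$, the set of all intervals $\{i,i+1,\dots,i+\ell-1\}$ with $i\equiv n\pmod{\ell-2r}$ is an $(\ell,r)$-cover of integers (there are exactly $\ell-2r$ distinct ones). For an integer $d\ge0$ and $I=\{i,\dots,i+\ell-1\}$ in a cover, $M_d(I)=\{i+d,\dots,i+\ell-d-1\}$. An $m$-plan for a cover $R$ is a function $p:R\to\mathbb Z_{\ge0}$ with $\sum_{I\in R}p(I)=m$. *)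

theory Defs
  imports Main
begin

text \<open>Unary predicate symbols have type 'p; a graph language L is a finite set of them
  (the binary symbol e is implicit).\<close>

record ('v, 'p) interp =
  verts :: "'v set"
  adj :: "'v \<Rightarrow> 'v \<Rightarrow> bool"
  pred :: "'p \<Rightarrow> 'v set"

definition is_graph :: "('v, 'p) interp \<Rightarrow> bool" where
  "is_graph G \<longleftrightarrow>
     (\<forall>u v. adj G u v \<longrightarrow> u \<in> verts G \<and> v \<in> verts G) \<and>
     (\<forall>u v. adj G u v \<longrightarrow> adj G v u) \<and> (\<forall>u. \<not> adj G u u)"

definition is_L_interp :: "'p set \<Rightarrow> ('v, 'p) interp \<Rightarrow> bool" where
  "is_L_interp L G \<longleftrightarrow> finite L \<and> is_graph G \<and> (\<forall>P\<in>L. pred G P \<subseteq> verts G)"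

definition induced :: "('v, 'p) interp \<Rightarrow> 'v set \<Rightarrow> ('v, 'p) interp" where
  "induced G S = \<lparr> verts = verts G \<inter> S,
                   adj = (\<lambda>u v. u \<in> S \<and> v \<in> S \<and> adj G u v),
                   pred = (\<lambda>P. pred G P \<inter> S) \<rparr>"

definition expand :: "('v, 'p) interp \<Rightarrow> 'p \<Rightarrow> 'v set \<Rightarrow> 'p \<Rightarrow> 'v set \<Rightarrow> ('v, 'p) interp" where
  "expand H C A M B = H\<lparr> pred := (pred H)(C := A, M := B) \<rparr>"

text \<open>Semantics of the formula d(x,y) \<le> k (literal unfolding of the abbreviation:
  witnesses z_0,...,z_k in the domain).\<close>
definition dist_le :: "('v, 'p) interp \<Rightarrow> 'v \<Rightarrow> 'v \<Rightarrow> nat \<Rightarrow> bool" where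
  "dist_le G x y k \<longleftrightarrow> (\<exists>zs. length zs = Suc k \<and> set zs \<subseteq> verts G \<and>
      zs ! 0 = x \<and> zs ! k = y \<and>
      (\<forall>i<k. zs ! i = zs ! Suc i \<or> adj G (zs ! i) (zs ! Suc i)))"

text \<open>Syntax of formulas whose quantifiers are all bounded by d(x,y) \<le> r, where x is
  variable 0 (the free variable). Atoms: equality, e, unary predicates.\<close>
datatype 'p lfm =
    LEq nat nat
  | LEdge nat nat
  | LPred 'p nat
  | LNeg "'p lfm"
  | LConj "'p lfm" "'p lfm"
  | LDisj "'p lfm" "'p lfm"
  | LExB nat "'p lfm"
  | LAllB nat "'p lfm"

fun lsat :: "('v, 'p) interp \<Rightarrow> nat \<Rightarrow> 'p lfm \<Rightarrow> (nat \<Rightarrow> 'v) \<Rightarrow> bool" where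
  "lsat G r (LEq a b) env = (env a = env b)"
| "lsat G r (LEdge a b) env = adj G (env a) (env b)"
| "lsat G r (LPred P a) env = (env a \<in> pred G P)"
| "lsat G r (LNeg f) env = (\<not> lsat G r f env)"
| "lsat G r (LConj f g) env = (lsat G r f env \<and> lsat G r g env)"
| "lsat G r (LDisj f g) env = (lsat G r f env \<or> lsat G r g env)"
| "lsat G r (LExB y f) env =
     (\<exists>u\<in>verts G. dist_le G (env 0) u r \<and> lsat G r f (env(y := u)))"
| "lsat G r (LAllB y f) env =
     (\<forall>u\<in>verts G. dist_le G (env 0) u r \<longrightarrow> lsat G r f (env(y := u)))"

fun lfv :: "'p lfm \<Rightarrow> nat set" where
  "lfv (LEq a b) = {a, b}"
| "lfv (LEdge a b) = {a, b}"
| "lfv (LPred P a) = {a}"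
| "lfv (LNeg f) = lfv f"
| "lfv (LConj f g) = lfv f \<union> lfv g"
| "lfv (LDisj f g) = lfv f \<union> lfv g"
| "lfv (LExB y f) = {0} \<union> (lfv f - {y})"
| "lfv (LAllB y f) = {0} \<union> (lfv f - {y})"

fun lbound_ok :: "'p lfm \<Rightarrow> bool" where
  "lbound_ok (LNeg f) = lbound_ok f"
| "lbound_ok (LConj f g) = (lbound_ok f \<and> lbound_ok g)"
| "lbound_ok (LDisj f g) = (lbound_ok f \<and> lbound_ok g)"
| "lbound_ok (LExB y f) = (y \<noteq> 0 \<and> lbound_ok f)"
| "lbound_ok (LAllB y f) = (y \<noteq> 0 \<and> lbound_ok f)"
| "lbound_ok _ = True"

fun lpreds :: "'p lfm \<Rightarrow> 'p set" where
  "lpreds (LPred P a) = {P}"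
| "lpreds (LNeg f) = lpreds f"
| "lpreds (LConj f g) = lpreds f \<union> lpreds g"
| "lpreds (LDisj f g) = lpreds f \<union> lpreds g"
| "lpreds (LExB y f) = lpreds f"
| "lpreds (LAllB y f) = lpreds f"
| "lpreds _ = {}"

definition local_formula :: "'p set \<Rightarrow> 'p lfm \<Rightarrow> bool" where
  "local_formula L \<psi> \<longleftrightarrow> lfv \<psi> \<subseteq> {0} \<and> lbound_ok \<psi> \<and> lpreds \<psi> \<subseteq> L"

definition core_holds :: "('v, 'p) interp \<Rightarrow> nat \<Rightarrow> 'p lfm \<Rightarrow> 'v \<Rightarrow> bool" where
  "core_holds G r \<psi> v = lsat G r \<psi> (\<lambda>_. v)"

text \<open>BEx m r \<psi> / BAll m r \<psi>: basic existential / universal sentence with spread m,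
  range r and core \<psi>.\<close>
datatype 'p bsent = BEx nat nat "'p lfm" | BAll nat nat "'p lfm"

fun spread :: "'p bsent \<Rightarrow> nat" where
  "spread (BEx m r \<psi>) = m" | "spread (BAll m r \<psi>) = m"

fun range_of :: "'p bsent \<Rightarrow> nat" where
  "range_of (BEx m r \<psi>) = r" | "range_of (BAll m r \<psi>) = r"

fun core :: "'p bsent \<Rightarrow> 'p lfm" where
  "core (BEx m r \<psi>) = \<psi>" | "core (BAll m r \<psi>) = \<psi>"

definition basic_sentence :: "'p set \<Rightarrow> 'p bsent \<Rightarrow> bool" where
  "basic_sentence L \<phi> \<longleftrightarrow> local_formula L (core \<phi>)"

definition far_apart :: "('v, 'p) interp \<Rightarrow> nat \<Rightarrow> 'v list \<Rightarrow> bool" where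
  "far_apart G r xs \<longleftrightarrow>
     (\<forall>i j. i < j \<and> j < length xs \<longrightarrow> \<not> dist_le G (xs ! i) (xs ! j) (2 * r))"

fun bsat :: "('v, 'p) interp \<Rightarrow> 'p bsent \<Rightarrow> bool" where
  "bsat G (BEx m r \<psi>) =
     (\<exists>xs. length xs = m \<and> set xs \<subseteq> verts G \<and> far_apart G r xs \<and>
           (\<forall>i<m. core_holds G r \<psi> (xs ! i)))"
| "bsat G (BAll m r \<psi>) =
     (\<forall>xs. length xs = Suc m \<and> set xs \<subseteq> verts G \<and> far_apart G r xs \<longrightarrow>
           (\<exists>i<Suc m. core_holds G r \<psi> (xs ! i)))"

fun variant_sat :: "('v, 'p) interp \<Rightarrow> 'p \<Rightarrow> 'p \<Rightarrow> nat \<Rightarrow> 'p bsent \<Rightarrow> bool" where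
  "variant_sat G C M k (BEx m r \<psi>) =
     (\<exists>xs. length xs = k \<and> set xs \<subseteq> verts G \<and> far_apart G r xs \<and>
           (\<forall>i<k. xs ! i \<in> pred G C \<and> core_holds G r \<psi> (xs ! i)))"
| "variant_sat G C M k (BAll m r \<psi>) =
     (\<forall>xs. length xs = Suc k \<and> set xs \<subseteq> verts G \<and> (\<forall>i<Suc k. xs ! i \<in> pred G M) \<and>
           far_apart G r xs \<longrightarrow> (\<exists>i<Suc k. core_holds G r \<psi> (xs ! i)))"

definition layering :: "('v, 'p) interp \<Rightarrow> ('v \<Rightarrow> int) \<Rightarrow> bool" where
  "layering G lam \<longleftrightarrow> (\<forall>u v. adj G u v \<longrightarrow> \<bar>lam u - lam v\<bar> \<le> 1)"

definition layer_preimage :: "('v, 'p) interp \<Rightarrow> ('v \<Rightarrow> int) \<Rightarrow> int set \<Rightarrow> 'v set" where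
  "layer_preimage G lam I = {v \<in> verts G. lam v \<in> I}"

definition is_cover :: "nat \<Rightarrow> nat \<Rightarrow> int set set \<Rightarrow> bool" where
  "is_cover ell r R \<longleftrightarrow> ell \<ge> 2 * r + 1 \<and>
     (\<exists>n::int. R = {{i .. i + int ell - 1} | i. i mod (int ell - 2 * int r) = n mod (int ell - 2 * int r)})"

definition Mid :: "nat \<Rightarrow> int set \<Rightarrow> int set" where
  "Mid d I = {Min I + int d .. Max I - int d}"

definition is_plan :: "nat \<Rightarrow> int set set \<Rightarrow> (int set \<Rightarrow> nat) \<Rightarrow> bool" where
  "is_plan m R p \<longleftrightarrow> finite {I \<in> R. p I \<noteq> 0} \<and> (\<Sum>I\<in>{I \<in> R. p I \<noteq> 0}. p I) = m"

end

theory Submission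
  imports Defs
begin

text \<open>Along a walk the layer index changes by at most one per step, so a walk of length k
  from v stays within the layers at distance at most k from \<lambda> v. Hence, if these layers
  lie in I, an r-local formula at v and distances up to k from v mean the same in G and in
  G[\<lambda>\<inverse>(I)].

  Existential case: each window I supplies p(I) far-apart witnesses in C = \<lambda>\<inverse>(M_2r(I)).
  Intervals of the cover start at least \<ell> - 2r apart, so the sets M_2r of distinct intervals
  are more than 2r layers apart and witnesses from distinct windows are far apart in G; since
  the plan sums to m, together they witness \<phi>.

  Universal case: the sets M_r(I) cover the integers, so m + 1 far-apart vertices of G can be
  assigned to intervals, and since the plan sums to m some I receives more than p(I) of them.
  These lie in M = \<lambda>\<inverse>(M_r(I)) and stay far apart in the window, so the variant of \<phi> there
  makes the core true at one of them, in the window and hence in G.\<close>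

lemma verts_induced [simp]: "verts (induced G S) = verts G \<inter> S"
  and adj_induced [simp]: "adj (induced G S) u v \<longleftrightarrow> u \<in> S \<and> v \<in> S \<and> adj G u v"
  and pred_induced [simp]: "pred (induced G S) P = pred G P \<inter> S"
  by (simp_all add: induced_def)

lemma verts_expand [simp]: "verts (expand H C A M B) = verts H"
  and adj_expand [simp]: "adj (expand H C A M B) = adj H"
  and pred_expand [simp]: "pred (expand H C A M B) = (pred H)(C := A, M := B)"
  by (simp_all add: expand_def)

lemma dist_le_expand [simp]: "dist_le (expand H C A M B) x y k = dist_le H x y k"
  by (simp add: dist_le_def)

lemma far_apart_expand [simp]: "far_apart (expand H C A M B) r xs = far_apart H r xs"
  by (simp add: far_apart_def)

lemma lsat_expand:
  "lpreds \<psi> \<inter> {C, M} = {} \<Longrightarrow> lsat (expand H C A M B) r \<psi> env = lsat H r \<psi> env"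
  by (induction \<psi> arbitrary: env) auto

lemma dist_le_induced_imp: "dist_le (induced G S) x y k \<Longrightarrow> dist_le G x y k"
  unfolding dist_le_def verts_induced adj_induced by blast

lemma far_apart_induced: "far_apart G r xs \<Longrightarrow> far_apart (induced G S) r xs"
  unfolding far_apart_def by (meson dist_le_induced_imp)

lemma far_apart_Nil [simp]: "far_apart G r []"
  by (simp add: far_apart_def)

lemma far_apart_Cons:
  "far_apart G r (x # xs) \<longleftrightarrow>
     (\<forall>y\<in>set xs. \<not> dist_le G x y (2 * r)) \<and> far_apart G r xs"
proof
  assume far: "far_apart G r (x # xs)"
  have "\<not> dist_le G x y (2 * r)" if "y \<in> set xs" for y
  proof -
    obtain j where "j < length xs" "y = xs ! j" using \<open>y \<in> set xs\<close> by (auto simp: in_set_conv_nth)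
    then show ?thesis using far[unfolded far_apart_def, rule_format, of 0 "Suc j"] by simp
  qed
  moreover have "far_apart G r xs"
    unfolding far_apart_def
    using far[unfolded far_apart_def, rule_format, of "Suc _" "Suc _"] by simp
  ultimately show "(\<forall>y\<in>set xs. \<not> dist_le G x y (2 * r)) \<and> far_apart G r xs" by blast
next
  assume "(\<forall>y\<in>set xs. \<not> dist_le G x y (2 * r)) \<and> far_apart G r xs"
  then show "far_apart G r (x # xs)"
    unfolding far_apart_def by (auto simp: nth_Cons split: nat.split)
qed

lemma far_apart_append:
  "far_apart G r (xs @ ys) \<longleftrightarrow> far_apart G r xs \<and> far_apart G r ys \<and>
     (\<forall>x\<in>set xs. \<forall>y\<in>set ys. \<not> dist_le G x y (2 * r))"
  by (induction xs) (auto simp: far_apart_Cons)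

lemma far_apart_concat:
  assumes "distinct ts" "\<And>t. t \<in> set ts \<Longrightarrow> far_apart G r (f t)"
    and "\<And>s t x y. s \<in> set ts \<Longrightarrow> t \<in> set ts \<Longrightarrow> s \<noteq> t \<Longrightarrow> x \<in> set (f s) \<Longrightarrow> y \<in> set (f t) \<Longrightarrow>
           \<not> dist_le G x y (2 * r)"
  shows "far_apart G r (concat (map f ts))"
  using assms
proof (induction ts)
  case (Cons t ts)
  then have "\<not> dist_le G x y (2 * r)" if "x \<in> set (f t)" "s \<in> set ts" "y \<in> set (f s)" for s x y
    using that by (metis list.set_intros distinct.simps(2))
  moreover have "far_apart G r (concat (map f ts))"
    using Cons.prems by (intro Cons.IH) (simp_all, blast)
  ultimately show ?case using Cons.prems(2) by (auto simp: far_apart_append)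
qed simp

lemma far_apart_nths: "far_apart G r xs \<Longrightarrow> far_apart G r (nths xs A)"
proof (induction xs arbitrary: A)
  case (Cons x xs)
  then show ?case
    by (auto simp: nths_Cons far_apart_Cons dest: in_set_nthsD)
qed simp

lemma layering_walk_bound:
  assumes "layering G lam" "\<forall>i<k. zs ! i = zs ! Suc i \<or> adj G (zs ! i) (zs ! Suc i)"
  shows "i \<le> k \<Longrightarrow> \<bar>lam (zs ! i) - lam (zs ! 0)\<bar> \<le> int i"
proof (induction i)
  case (Suc i)
  have "zs ! i = zs ! Suc i \<or> adj G (zs ! i) (zs ! Suc i)"
    using assms(2) Suc.prems Suc_le_lessD by blast
  then have "\<bar>lam (zs ! i) - lam (zs ! Suc i)\<bar> \<le> 1"
    using assms(1) unfolding layering_def by auto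
  moreover have "\<bar>lam (zs ! i) - lam (zs ! 0)\<bar> \<le> int i"
    using Suc by simp
  ultimately show ?case by linarith
qed simp

lemma layering_dist_le:
  assumes "layering G lam" "dist_le G x y k"
  shows "\<bar>lam y - lam x\<bar> \<le> int k"
proof -
  obtain zs where "zs ! 0 = x" "zs ! k = y"
      and walk: "\<forall>i<k. zs ! i = zs ! Suc i \<or> adj G (zs ! i) (zs ! Suc i)"
    using assms(2) unfolding dist_le_def by blast
  with layering_walk_bound[OF assms(1) walk, of k] show ?thesis by simp
qed

lemma dist_le_induced_layer_iff:
  assumes lam: "layering G lam" and ball: "{lam x - int k .. lam x + int k} \<subseteq> I"
  shows "dist_le (induced G (layer_preimage G lam I)) x y k \<longleftrightarrow> dist_le G x y k"
proof
  let ?S = "layer_preimage G lam I"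
  assume "dist_le G x y k"
  then obtain zs where zs: "length zs = Suc k" "set zs \<subseteq> verts G" "zs ! 0 = x" "zs ! k = y"
      and walk: "\<forall>i<k. zs ! i = zs ! Suc i \<or> adj G (zs ! i) (zs ! Suc i)"
    unfolding dist_le_def by blast
  have in_S: "zs ! i \<in> ?S" if "i \<le> k" for i
  proof -
    have "lam (zs ! i) \<in> I"
      using layering_walk_bound[OF lam walk that] zs(3) ball that by (auto simp: abs_le_iff)
    moreover have "zs ! i \<in> verts G"
      using zs(1,2) that by (auto simp: subset_iff)
    ultimately show ?thesis by (simp add: layer_preimage_def)
  qed
  then have "set zs \<subseteq> ?S"
    using zs(1) by (auto simp: in_set_conv_nth less_Suc_eq_le)
  moreover have "\<forall>i<k. zs ! i = zs ! Suc i \<or> adj (induced G ?S) (zs ! i) (zs ! Suc i)"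
    using walk in_S by (simp only: adj_induced) (meson Suc_leI less_imp_le_nat)
  ultimately show "dist_le (induced G ?S) x y k"
    unfolding dist_le_def using zs by auto
qed (rule dist_le_induced_imp)

lemma ball_induced_layer_iff:
  assumes lam: "layering G lam" and ball: "{lam v - int k .. lam v + int k} \<subseteq> I"
  shows "u \<in> verts (induced G (layer_preimage G lam I)) \<and> dist_le (induced G (layer_preimage G lam I)) v u k
     \<longleftrightarrow> u \<in> verts G \<and> dist_le G v u k"
proof -
  have "lam u \<in> I" if "dist_le G v u k"
    using layering_dist_le[OF lam that] ball by (auto simp: abs_le_iff)
  then show ?thesis
    using dist_le_induced_layer_iff[OF lam ball] by (auto simp: layer_preimage_def)
qed

lemma lsat_induced_layer:
  assumes lam: "layering G lam" and ball: "{lam v - int r .. lam v + int r} \<subseteq> I"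
  shows "lbound_ok \<psi> \<Longrightarrow> env 0 = v \<Longrightarrow> range env \<subseteq> layer_preimage G lam I \<Longrightarrow>
    lsat (induced G (layer_preimage G lam I)) r \<psi> env = lsat G r \<psi> env"
proof (induction \<psi> arbitrary: env)
  case (LExB y f)
  have "lsat (induced G (layer_preimage G lam I)) r f (env(y := u)) = lsat G r f (env(y := u))"
    if "u \<in> verts (induced G (layer_preimage G lam I))" for u
    using LExB.prems that by (intro LExB.IH) auto
  then show ?case
    using ball_induced_layer_iff[OF lam ball] LExB.prems(2) by (simp only: lsat.simps) blast
next
  case (LAllB y f)
  have "lsat (induced G (layer_preimage G lam I)) r f (env(y := u)) = lsat G r f (env(y := u))"
    if "u \<in> verts (induced G (layer_preimage G lam I))" for u
    using LAllB.prems that by (intro LAllB.IH) auto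
  then show ?case
    using ball_induced_layer_iff[OF lam ball] LAllB.prems(2) by (simp only: lsat.simps) blast
qed auto

lemma Mid_atLeastAtMost: "i \<le> j \<Longrightarrow> Mid k {i..j} = {i + int k .. j - int k}"
proof -
  assume "i \<le> j"
  then have "Min {i..j} = i" "Max {i..j} = j"
    by (auto intro: Min_eqI Max_eqI)
  then show ?thesis by (simp add: Mid_def)
qed

lemma is_coverE:
  assumes "is_cover ell r R"
  obtains n where "int ell - 2 * int r > 0"
    and "R = {{i .. i + int ell - 1} | i. i mod (int ell - 2 * int r) = n mod (int ell - 2 * int r)}"
  using assms unfolding is_cover_def by auto

lemma cover_memE:
  assumes "is_cover ell r R" "I \<in> R"
  obtains i where "I = {i .. i + int ell - 1}" "Mid k I = {i + int k .. i + int ell - 1 - int k}"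
proof -
  obtain i where "I = {i .. i + int ell - 1}"
    using assms by (elim is_coverE) blast
  moreover have "ell \<ge> 1" using assms(1) by (simp add: is_cover_def)
  ultimately show ?thesis using Mid_atLeastAtMost that by simp
qed

lemma ball_subset_cover_interval:
  assumes "is_cover ell r R" "I \<in> R" "a \<in> Mid k I" "r' \<le> k"
  shows "{a - int r' .. a + int r'} \<subseteq> I"
  using assms by (elim cover_memE[of _ _ _ _ k]) auto

lemma cover_Mid_covers:
  assumes "is_cover ell r R"
  shows "\<exists>I\<in>R. a \<in> Mid r I"
proof -
  obtain n where pos: "int ell - 2 * int r > 0"
    and R: "R = {{i .. i + int ell - 1} | i. i mod (int ell - 2 * int r) = n mod (int ell - 2 * int r)}"
    by (rule is_coverE[OF assms])
  define d where "d = int ell - 2 * int r"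
  define i where "i = n + d * ((a - int r - n) div d)"
  have "i mod d = n mod d"
    unfolding i_def by simp
  then have "{i .. i + int ell - 1} \<in> R"
    unfolding R d_def by blast
  moreover have "a - int r - i = (a - int r - n) mod d"
    unfolding i_def using div_mult_mod_eq[of "a - int r - n" d] by (simp add: algebra_simps)
  moreover have "0 \<le> (a - int r - n) mod d" "(a - int r - n) mod d < d"
    using pos unfolding d_def by simp_all
  ultimately have "i + int r \<le> a" "a \<le> i + int ell - 1 - int r"
    unfolding d_def by linarith+
  moreover have "Mid r {i .. i + int ell - 1} = {i + int r .. i + int ell - 1 - int r}"
    using pos by (intro Mid_atLeastAtMost) linarith
  ultimately show ?thesis using \<open>{i .. i + int ell - 1} \<in> R\<close> by auto
qed

lemma cover_Mid_separated:
  assumes "is_cover ell r R" "s \<in> R" "t \<in> R" "s \<noteq> t" "a \<in> Mid (2 * r) s" "b \<in> Mid (2 * r) t"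
  shows "2 * int r < \<bar>a - b\<bar>"
proof -
  obtain n where pos: "int ell - 2 * int r > 0"
    and R: "R = {{i .. i + int ell - 1} | i. i mod (int ell - 2 * int r) = n mod (int ell - 2 * int r)}"
    by (rule is_coverE[OF assms(1)])
  define d where "d = int ell - 2 * int r"
  obtain i where s: "s = {i .. i + int ell - 1}" and i: "i mod d = n mod d"
    using assms(2) unfolding R d_def by blast
  obtain j where t: "t = {j .. j + int ell - 1}" and j: "j mod d = n mod d"
    using assms(3) unfolding R d_def by blast
  have "d dvd (i - j)"
    using i j by (simp add: mod_eq_dvd_iff [symmetric])
  moreover have "i - j \<noteq> 0" using s t assms(4) by auto
  ultimately have "\<bar>d\<bar> \<le> \<bar>i - j\<bar>"
    by (intro dvd_imp_le_int)
  moreover have "Mid (2 * r) s = {i + 2 * int r .. i + int ell - 1 - 2 * int r}"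
    "Mid (2 * r) t = {j + 2 * int r .. j + int ell - 1 - 2 * int r}"
    unfolding s t using pos by (simp_all add: Mid_atLeastAtMost)
  ultimately show ?thesis
    using assms(5,6) pos unfolding d_def by (auto simp: abs_if split: if_splits)
qed

lemma plan_pigeonhole:
  assumes plan: "is_plan m R p" and A: "finite A" "m < card A" and h: "h ` A \<subseteq> R"
  shows "\<exists>I\<in>R. p I < card {a \<in> A. h a = I}"
proof (rule ccontr)
  assume "\<not> ?thesis"
  then have fibre: "card {a \<in> A. h a = I} \<le> p I" if "I \<in> R" for I
    using that by (simp add: not_less)
  define T where "T = {I \<in> R. p I \<noteq> 0}"
  have "h ` A \<subseteq> T"
  proof
    fix I assume "I \<in> h ` A"
    then have "I \<in> R" "{a \<in> A. h a = I} \<noteq> {}" using h by auto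
    moreover have "finite {a \<in> A. h a = I}" using A(1) by simp
    ultimately have "0 < p I" using fibre[of I] card_gt_0_iff by fastforce
    with \<open>I \<in> R\<close> show "I \<in> T" unfolding T_def by simp
  qed
  have "card A = (\<Sum>I\<in>h ` A. card {a \<in> A. h a = I})"
    using sum.image_gen[OF A(1), of "\<lambda>_. 1" h] by (simp only: card_eq_sum)
  also have "\<dots> \<le> (\<Sum>I\<in>h ` A. p I)"
    using h fibre by (intro sum_mono) auto
  also have "\<dots> \<le> (\<Sum>I\<in>T. p I)"
    using plan \<open>h ` A \<subseteq> T\<close> unfolding is_plan_def T_def by (intro sum_mono2) auto
  also have "\<dots> = m"
    using plan unfolding is_plan_def T_def by simp
  finally show False using A(2) by simp
qed

definition window :: "('v, 'p) interp \<Rightarrow> ('v \<Rightarrow> int) \<Rightarrow> 'p \<Rightarrow> 'p \<Rightarrow> nat \<Rightarrow> int set \<Rightarrow> ('v, 'p) interp"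
  where "window G lam C M r I =
    expand (induced G (layer_preimage G lam I))
      C (layer_preimage G lam (Mid (2 * r) I)) M (layer_preimage G lam (Mid r I))"

lemma verts_window: "verts (window G lam C M r I) = layer_preimage G lam I"
  by (auto simp: window_def layer_preimage_def)

lemma pred_window_C: "C \<noteq> M \<Longrightarrow> pred (window G lam C M r I) C = layer_preimage G lam (Mid (2 * r) I)"
  and pred_window_M: "pred (window G lam C M r I) M = layer_preimage G lam (Mid r I)"
  by (simp_all add: window_def)

lemma far_apart_window: "far_apart G r' xs \<Longrightarrow> far_apart (window G lam C M r I) r' xs"
  by (simp add: window_def far_apart_induced)

lemma core_holds_window:
  assumes "layering G lam" "{lam v - int r' .. lam v + int r'} \<subseteq> I" "v \<in> verts G"
    and "local_formula L \<psi>" "C \<notin> L" "M \<notin> L"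
  shows "core_holds (window G lam C M r I) r' \<psi> v \<longleftrightarrow> core_holds G r' \<psi> v"
proof -
  have "v \<in> layer_preimage G lam I"
    using assms(2,3) by (auto simp: layer_preimage_def)
  moreover have "lpreds \<psi> \<inter> {C, M} = {}" "lbound_ok \<psi>"
    using assms(4-6) by (auto simp: local_formula_def)
  ultimately show ?thesis
    unfolding core_holds_def window_def
    by (simp add: lsat_expand lsat_induced_layer[OF assms(1,2)] image_subset_iff)
qed

context
  fixes L :: "'p set" and C M :: 'p and G :: "('v, 'p) interp" and lam :: "'v \<Rightarrow> int"
    and ell r r' :: nat and R :: "int set set" and \<psi> :: "'p lfm"
  assumes local: "local_formula L \<psi>" and fresh: "C \<notin> L" "M \<notin> L" "C \<noteq> M"
    and layering: "layering G lam" and cover: "is_cover ell r R" and range: "r' \<le> r"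
begin

lemma core_holds_window_Mid:
  assumes "I \<in> R" "v \<in> verts G" "lam v \<in> Mid k I" "r' \<le> k"
  shows "core_holds (window G lam C M r I) r' \<psi> v \<longleftrightarrow> core_holds G r' \<psi> v"
  using core_holds_window[OF layering ball_subset_cover_interval[OF cover assms(1,3,4)]
      assms(2) local fresh(1,2)] .

lemma window_witnesses_BEx:
  assumes I: "I \<in> R" and sat: "variant_sat (window G lam C M r I) C M k (BEx m r' \<psi>)"
  shows "\<exists>xs. length xs = k \<and> far_apart G r' xs \<and>
    (\<forall>x\<in>set xs. x \<in> verts G \<and> lam x \<in> Mid (2 * r) I \<and> core_holds G r' \<psi> x)"
proof -
  let ?W = "window G lam C M r I"
  obtain xs where xs: "length xs = k" "far_apart ?W r' xs"
    and C_core: "\<forall>i<k. xs ! i \<in> pred ?W C \<and> core_holds ?W r' \<psi> (xs ! i)"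
    using sat by auto
  have mem: "x \<in> verts G \<and> lam x \<in> Mid (2 * r) I \<and> core_holds G r' \<psi> x"
    if x: "x \<in> set xs" for x
  proof -
    obtain i where "i < length xs" "x = xs ! i"
      using x by (auto simp: in_set_conv_nth)
    then have "x \<in> layer_preimage G lam (Mid (2 * r) I)" "core_holds ?W r' \<psi> x"
      using C_core xs(1) by (auto simp: pred_window_C[OF fresh(3)])
    moreover from this have "x \<in> verts G" "lam x \<in> Mid (2 * r) I"
      by (auto simp: layer_preimage_def)
    ultimately show ?thesis
      using core_holds_window_Mid[OF I, of x "2 * r"] range by simp
  qed
  have "far_apart G r' xs"
    unfolding far_apart_def
  proof (intro allI impI notI)
    fix i j assume ij: "i < j \<and> j < length xs" and "dist_le G (xs ! i) (xs ! j) (2 * r')"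
    moreover have "{lam (xs ! i) - int (2 * r') .. lam (xs ! i) + int (2 * r')} \<subseteq> I"
      using mem[of "xs ! i"] ij range by (intro ball_subset_cover_interval[OF cover I]) auto
    ultimately have "dist_le ?W (xs ! i) (xs ! j) (2 * r')"
      by (simp add: window_def dist_le_induced_layer_iff[OF layering])
    then show False using xs(2) ij unfolding far_apart_def by blast
  qed
  with xs(1) mem show ?thesis by blast
qed

lemma bsat_BEx_of_windows:
  assumes plan: "is_plan m R p"
    and sat: "\<forall>I\<in>R. variant_sat (window G lam C M r I) C M (p I) (BEx m r' \<psi>)"
  shows "bsat G (BEx m r' \<psi>)"
proof -
  have "\<forall>I\<in>R. \<exists>xs. length xs = p I \<and> far_apart G r' xs \<and>
      (\<forall>x\<in>set xs. x \<in> verts G \<and> lam x \<in> Mid (2 * r) I \<and> core_holds G r' \<psi> x)"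
    using sat window_witnesses_BEx by blast
  then obtain f where f: "\<forall>I\<in>R. length (f I) = p I \<and> far_apart G r' (f I) \<and>
      (\<forall>x\<in>set (f I). x \<in> verts G \<and> lam x \<in> Mid (2 * r) I \<and> core_holds G r' \<psi> x)"
    by (rule bchoice[THEN exE])
  define T where "T = {I \<in> R. p I \<noteq> 0}"
  obtain ts where ts: "set ts = T" "distinct ts"
    using plan finite_distinct_list unfolding is_plan_def T_def by blast
  have TR: "T \<subseteq> R" unfolding T_def by blast
  define xs where "xs = concat (map f ts)"
  have "length xs = (\<Sum>I\<leftarrow>ts. p I)"
    unfolding xs_def length_concat map_map
    using f ts TR by (intro arg_cong[where f = sum_list] map_cong) auto
  also have "\<dots> = m"
    using plan ts unfolding is_plan_def T_def by (simp add: sum_list_distinct_conv_sum_set)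
  finally have "length xs = m" .
  moreover have "far_apart G r' xs"
    unfolding xs_def
  proof (rule far_apart_concat[OF ts(2)])
    fix s t x y
    assume "s \<in> set ts" "t \<in> set ts" "s \<noteq> t" "x \<in> set (f s)" "y \<in> set (f t)"
    then have "2 * int r < \<bar>lam x - lam y\<bar>"
      using f ts TR by (intro cover_Mid_separated[OF cover, of s t]) auto
    then show "\<not> dist_le G x y (2 * r')"
      using layering_dist_le[OF layering, of x y] range by fastforce
  qed (use f ts TR in auto)
  moreover have "x \<in> verts G \<and> core_holds G r' \<psi> x" if "x \<in> set xs" for x
    using that f ts TR unfolding xs_def by auto
  ultimately show ?thesis
    by (auto intro!: exI[of _ xs])
qed

lemma bsat_BAll_of_windows:
  assumes plan: "is_plan m R p"
    and sat: "\<forall>I\<in>R. variant_sat (window G lam C M r I) C M (p I) (BAll m r' \<psi>)"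
  shows "bsat G (BAll m r' \<psi>)"
  unfolding bsat.simps
proof (intro allI impI)
  fix xs assume xs: "length xs = Suc m \<and> set xs \<subseteq> verts G \<and> far_apart G r' xs"
  obtain g where g: "\<And>a. g a \<in> R \<and> a \<in> Mid r (g a)"
    using cover_Mid_covers[OF cover] by metis
  define h where "h j = g (lam (xs ! j))" for j
  obtain I where I: "I \<in> R" and crowded: "p I < card {j \<in> {..<Suc m}. h j = I}"
    using plan_pigeonhole[OF plan, of "{..<Suc m}" h] g unfolding h_def by auto
  then obtain J where J: "J \<subseteq> {j \<in> {..<Suc m}. h j = I}" "card J = Suc (p I)"
    by (meson Suc_leI obtain_subset_with_card_n)
  define ys where "ys = nths xs J"
  have "{j. j < length xs \<and> j \<in> J} = J"
    using J(1) xs by auto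
  then have len: "length ys = Suc (p I)"
    unfolding ys_def length_nths using J(2) by simp
  have in_ys: "\<exists>j<Suc m. y = xs ! j \<and> y \<in> verts G \<and> lam y \<in> Mid r I"
    if y: "y \<in> set ys" for y
  proof -
    obtain j where "y = xs ! j" "j < Suc m" "j \<in> J"
      using y xs unfolding ys_def set_nths by auto
    with J(1) xs g[of "lam y"] show ?thesis
      unfolding h_def by (auto simp: subset_iff)
  qed
  have "set ys \<subseteq> verts (window G lam C M r I)"
    using in_ys ball_subset_cover_interval[OF cover I, of _ r 0]
    by (auto simp: verts_window layer_preimage_def)
  moreover have "\<forall>i<Suc (p I). ys ! i \<in> pred (window G lam C M r I) M"
  proof (intro allI impI)
    fix i assume "i < Suc (p I)"
    then have "ys ! i \<in> set ys" using len by simp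
    then show "ys ! i \<in> pred (window G lam C M r I) M"
      using in_ys[of "ys ! i"] by (auto simp: pred_window_M layer_preimage_def)
  qed
  moreover have "far_apart (window G lam C M r I) r' ys"
    unfolding ys_def using xs by (intro far_apart_window far_apart_nths) simp
  ultimately have "\<exists>i<Suc (p I). core_holds (window G lam C M r I) r' \<psi> (ys ! i)"
    using sat[rule_format, OF I] len by simp
  then obtain i where "i < Suc (p I)" "core_holds (window G lam C M r I) r' \<psi> (ys ! i)"
    by blast
  moreover from this obtain j where "j < Suc m" "ys ! i = xs ! j" "xs ! j \<in> verts G" "lam (xs ! j) \<in> Mid r I"
    using in_ys[of "ys ! i"] len by auto
  ultimately show "\<exists>i<Suc m. core_holds G r' \<psi> (xs ! i)"
    using core_holds_window_Mid[OF I, of "xs ! j" r] range by auto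
qed

end

theorem mainTheorem13:
  fixes L :: "'p set" and \<phi> :: "'p bsent" and C M :: 'p
    and G :: "('v, 'p) interp" and lam :: "'v \<Rightarrow> int"
    and r ell :: nat and R :: "int set set" and p :: "int set \<Rightarrow> nat"
  assumes "basic_sentence L \<phi>"
    and "finite L"
    and "C \<notin> L" and "M \<notin> L" and "C \<noteq> M"
    and "is_L_interp L G"
    and "layering G lam"
    and "range_of \<phi> \<le> r" and "ell > 4 * r"
    and "is_cover ell r R"
    and "is_plan (spread \<phi>) R p"
    and "\<forall>I\<in>R. variant_sat
           (expand (induced G (layer_preimage G lam I))
                   C (layer_preimage G lam (Mid (2 * r) I))
                   M (layer_preimage G lam (Mid r I)))
           C M (p I) \<phi>"
  shows "bsat G \<phi>"
proof -
  have windows: "\<forall>I\<in>R. variant_sat (window G lam C M r I) C M (p I) \<phi>"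
    unfolding window_def by (rule assms(12))
  show ?thesis
  proof (cases \<phi>)
    case (BEx m r' \<psi>)
    then have "local_formula L \<psi>" "r' \<le> r" "is_plan m R p"
      "\<forall>I\<in>R. variant_sat (window G lam C M r I) C M (p I) (BEx m r' \<psi>)"
      using assms(1,8,11) windows by (simp_all add: basic_sentence_def)
    then show ?thesis
      unfolding BEx by (intro bsat_BEx_of_windows[OF _ assms(3-5,7,10)])
  next
    case (BAll m r' \<psi>)
    then have "local_formula L \<psi>" "r' \<le> r" "is_plan m R p"
      "\<forall>I\<in>R. variant_sat (window G lam C M r I) C M (p I) (BAll m r' \<psi>)"
      using assms(1,8,11) windows by (simp_all add: basic_sentence_def)
    then show ?thesis
      unfolding BAll by (intro bsat_BAll_of_windows[OF _ assms(3-5,7,10)])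
  qed
qed

end
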